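(* For any pairwise commuting qubit states $\rho,\sigma,\omega\in\mathcal{S}(\mathbb{C}^2)$, $$d^2_{\mathrm{symm},2}(\rho,\sigma)+d^2_{\mathrm{symm},2}(\sigma,\omega)\ge d^2_{\mathrm{symm},2}(\rho,\omega).$$
   Context: Qubit setting: $\mathcal{H}=\mathbb{C}^2$, $\mathcal{H}^*$ is identified with $\mathbb{C}^2$ via the dual basis, and $A^T$ is the usual matrix transpose; operators on $\mathcal{H}\otimes\mathcal{H}^*$ are $4\times4$ matrices in the basis $e_1\otimes e_1^*,e_1\otimes e_2^*,e_2\otimes e_1^*,e_2\otimes e_2^*$. Pauli matrices: $\sigma_1=\begin{pmatrix}0&1\\1&0\end{pmatrix}$, $\sigma_2=\begin{pmatrix}0&-i\\i&0\end{pmatrix}$, $\sigma_3=\begin{pmatrix}1&0\\0&-1\end{pmatrix}$. The set of couplings of states $\rho,\omega$ is $\mathcal{C}(\rho,\omega)=\{\Pi\in\mathcal{S}(\mathcal{H}\otimes\mathcal{H}^* ):\mathrm{tr}_{\mathcal{H}^*}[\Pi]=\omega,\ \mathrm{tr}_{\mathcal{H}}[\Pi]=\rho^T\}$. $C_{\mathrm{symm},2}=\sum_{k=1}^3(\sigma_k\otimes I^T-I\otimes\sigma_k^T)^2$, which equals the matrix $\begin{pmatrix}4&0&0&-4\\0&8&0&0\\0&0&8&0\\-4&0&0&4\end{pmatrix}$; $D^2_{\mathrm{symm},2}(\rho,\omega)=\min_{\Pi\in\mathcal{C}(\rho,\omega)}\mathrm{tr}[\Pi C_{\mathrm{symm},2}]$,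 and $d_{\mathrm{symm},2}(\rho,\omega)=\big(D^2_{\mathrm{symm},2}(\rho,\omega)-\tfrac12(D^2_{\mathrm{symm},2}(\rho,\rho)+D^2_{\mathrm{symm},2}(\omega,\omega))\big)^{1/2}$. Note the claim is the triangle inequality for the squared quantity $d^2_{\mathrm{symm},2}$. *)

theory Defs
  imports "HOL-Analysis.Analysis"
begin

text \<open>Operators on H (x) H* are matrices indexed by
  pairs (i,j) :: 2 \<times> 2, where (i,j) stands for the basis vector e_i (x) e_j^*.\<close>

type_synonym qmat = "complex^2^2"
type_synonym qqmat = "complex^(2\<times>2)^(2\<times>2)"

definition mtr :: "complex^'n^'n \<Rightarrow> complex" where
  "mtr A = (\<Sum>i\<in>UNIV. A$i$i)"

definition psd :: "complex^'n^'n \<Rightarrow> bool" where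
  "psd A \<longleftrightarrow> (\<forall>v::complex^'n. Im (\<Sum>i\<in>UNIV. cnj (v$i) * (A *v v)$i) = 0
                                   \<and> Re (\<Sum>i\<in>UNIV. cnj (v$i) * (A *v v)$i) \<ge> 0)"

definition is_state :: "complex^'n^'n \<Rightarrow> bool" where
  "is_state A \<longleftrightarrow> psd A \<and> mtr A = 1"

definition kron :: "qmat \<Rightarrow> qmat \<Rightarrow> qqmat" where
  "kron A B = (\<chi> p q. A$(fst p)$(fst q) * B$(snd p)$(snd q))"

definition sigma1 :: qmat where
  "sigma1 = (\<chi> i j. if i = j then 0 else 1)"
definition sigma2 :: qmat where
  "sigma2 = (\<chi> i j. if i = j then 0 else if i = 1 then - \<i> else \<i>)"
definition sigma3 :: qmat where
  "sigma3 = (\<chi> i j. if i = j then (if i = 1 then 1 else -1) else 0)"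

definition pauli :: "nat \<Rightarrow> qmat" where
  "pauli k = (if k = 1 then sigma1 else if k = 2 then sigma2 else sigma3)"

definition C_symm2 :: qqmat where
  "C_symm2 = (\<Sum>k\<in>{1..3::nat}.
      (kron (pauli k) (transpose (mat 1)) - kron (mat 1) (transpose (pauli k))) **
      (kron (pauli k) (transpose (mat 1)) - kron (mat 1) (transpose (pauli k))))"

definition ptr_Hstar :: "qqmat \<Rightarrow> qmat" where
  "ptr_Hstar P = (\<chi> i k. \<Sum>j\<in>UNIV. P$(i,j)$(k,j))"
definition ptr_H :: "qqmat \<Rightarrow> qmat" where
  "ptr_H P = (\<chi> j l. \<Sum>i\<in>UNIV. P$(i,j)$(i,l))"

definition couplings :: "qmat \<Rightarrow> qmat \<Rightarrow> qqmat set" where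
  "couplings \<rho> \<omega> = {P. is_state P \<and> ptr_Hstar P = \<omega> \<and> ptr_H P = transpose \<rho>}"

text \<open>D^2_symm,2 (rho, omega) = min over couplings of tr[Pi C]; the trace is real
  (Pi and C Hermitian), we take its real part. The minimum is attained (compact set),
  so Inf coincides with it.\<close>
definition D2_symm2 :: "qmat \<Rightarrow> qmat \<Rightarrow> real" where
  "D2_symm2 \<rho> \<omega> = Inf ((\<lambda>P. Re (mtr (P ** C_symm2))) ` couplings \<rho> \<omega>)"

definition d2_symm2 :: "qmat \<Rightarrow> qmat \<Rightarrow> real" where
  "d2_symm2 \<rho> \<omega> = D2_symm2 \<rho> \<omega> - (D2_symm2 \<rho> \<rho> + D2_symm2 \<omega> \<omega>) / 2"

end

theory Submission
  imports Defs
begin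

(* Pairwise commuting states have a common orthonormal eigenbasis u1, u2, in which they are
   diagonal with spectra (p, 1 - p). For a coupling Pi, tr[Pi C_symm,2] = 8 - 4 <Phi|Pi|Phi>
   with Phi = u1 (x) u1^* + u2 (x) u2^* the maximally entangled vector. The marginal constraints
   bound the weight of Pi on u_k (x) u_k^* by the eigenvalues of both states, so Cauchy-Schwarz
   for the positive form of Pi gives <Phi|Pi|Phi> <= (sqrt (min p q) + sqrt (min (1-p) (1-q)))^2,
   and an explicit coupling attains this bound. Hence D^2 = 8 - 4 overlap p q, and the claim
   reduces to overlap r s + overlap s w <= overlap s s + overlap r w for r, s, w in [0, 1],
   an elementary estimate on square roots. *)

lemma sum_UNIV_prod:
  "sum f (UNIV :: ('a::finite \<times> 'b::finite) set) = (\<Sum>i\<in>UNIV. \<Sum>j\<in>UNIV. f (i, j))"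
  by (simp add: sum.cartesian_product UNIV_Times_UNIV[symmetric] del: UNIV_Times_UNIV)

lemma sum_UNIV_2x2: "sum f (UNIV :: (2 \<times> 2) set) = f (1,1) + f (1,2) + f (2,1) + f (2,2)"
  by (simp add: sum_UNIV_prod sum_2 add.assoc)

section \<open>Hermitian inner product and positive matrices\<close>

definition cinner :: "complex^'n \<Rightarrow> complex^'n \<Rightarrow> complex" where
  "cinner x y = (\<Sum>i\<in>UNIV. cnj (x$i) * y$i)"

abbreviation qform :: "complex^'n^'n \<Rightarrow> complex^'n \<Rightarrow> complex" where
  "qform A v \<equiv> cinner v (A *v v)"

definition outer :: "complex^'n \<Rightarrow> complex^'n \<Rightarrow> complex^'n^'n" where
  "outer x y = (\<chi> i j. x$i * cnj (y$j))"

lemma cinner_commute: "cinner y x = cnj (cinner x y)"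
  by (simp add: cinner_def mult.commute)

lemma cinner_add_left: "cinner (x + y) z = cinner x z + cinner y z"
  by (simp add: cinner_def sum.distrib algebra_simps)

lemma cinner_add_right: "cinner x (y + z) = cinner x y + cinner x z"
  by (simp add: cinner_def sum.distrib algebra_simps)

lemma cinner_scale_left: "cinner (c *s x) y = cnj c * cinner x y"
  by (simp add: cinner_def sum_distrib_left algebra_simps)

lemma cinner_scale_right: "cinner x (c *s y) = c * cinner x y"
  by (simp add: cinner_def sum_distrib_left algebra_simps)

lemma cinner_axis_left: "cinner (axis i c) y = cnj c * y$i"
  by (simp add: cinner_def axis_def if_distrib[of cnj] if_distrib[of "\<lambda>x. x * _"] cong: if_cong)

lemma matrix_vector_mult_axis: "A *v axis j c = (\<chi> i. A$i$j * c)"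
  by (simp add: matrix_vector_mult_def axis_def vec_eq_iff if_distrib[of "\<lambda>x. _ * x"] cong: if_cong)

lemma outer_mult_vec: "outer x y *v v = cinner y v *s x"
  by (simp add: outer_def cinner_def matrix_vector_mult_def vec_eq_iff sum_distrib_left
      algebra_simps)

lemma matrix_mul_outer: "A ** outer x y = outer (A *v x) y"
  by (simp add: outer_def matrix_matrix_mult_def matrix_vector_mult_def vec_eq_iff
      sum_distrib_left algebra_simps)

lemma outer_add_left: "outer (x + y) z = outer x z + outer y z"
  by (simp add: outer_def vec_eq_iff algebra_simps)

lemma outer_add_right: "outer x (y + z) = outer x y + outer x z"
  by (simp add: outer_def vec_eq_iff algebra_simps)

lemma outer_scaleR_left: "outer (c *\<^sub>R x) y = c *\<^sub>R outer x y"
  by (simp add: outer_def vec_eq_iff)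

lemma outer_scaleR_right: "outer x (c *\<^sub>R y) = c *\<^sub>R outer x y"
  by (simp add: outer_def vec_eq_iff)

lemma outer_of_real_scale_left: "outer (of_real c *s x) y = c *\<^sub>R outer x y"
  by (simp add: outer_def vec_eq_iff scaleR_conv_of_real[symmetric])

lemma mtr_add: "mtr (A + B) = mtr A + mtr B"
  by (simp add: mtr_def sum.distrib)

lemma mtr_scaleR: "mtr (c *\<^sub>R A) = of_real c * mtr A"
  by (simp add: mtr_def sum_distrib_left scaleR_conv_of_real[symmetric])

lemma mtr_outer: "mtr (outer x y) = cinner y x"
  by (simp add: mtr_def outer_def cinner_def mult.commute)

lemma qform_add: "qform (A + B) v = qform A v + qform B v"
  by (simp add: matrix_vector_mult_add_rdistrib cinner_add_right)

lemma qform_scaleR: "qform (c *\<^sub>R A) v = of_real c * qform A v"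
  by (simp add: cinner_def matrix_vector_mult_def sum_distrib_left scaleR_conv_of_real[symmetric]
      algebra_simps)

lemma qform_outer: "qform (outer x y) v = cinner v x * cinner y v"
  by (simp add: outer_mult_vec cinner_scale_right mult.commute)

lemma qform_linear_combination:
  "qform P (a *s x + b *s y) = cnj a * a * qform P x + cnj b * b * qform P y
     + cnj a * b * cinner x (P *v y) + cnj b * a * cinner y (P *v x)"
  by (simp add: cinner_def matrix_vector_mult_def sum.distrib sum_distrib_left algebra_simps)

lemma psd_iff_qform: "psd A \<longleftrightarrow> (\<forall>v. Im (qform A v) = 0 \<and> 0 \<le> Re (qform A v))"
  by (simp add: psd_def cinner_def)

lemma psd_outer_self: "psd (outer x x)"
proof -
  have "qform (outer x x) v = of_real ((cmod (cinner v x))^2)" for v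
    using complex_norm_square[of "cinner v x"] by (simp add: qform_outer cinner_commute[of x v])
  then show ?thesis by (simp add: psd_iff_qform)
qed

lemma psd_add: "psd A \<Longrightarrow> psd B \<Longrightarrow> psd (A + B)"
  by (simp add: psd_iff_qform qform_add)

lemma psd_scaleR: "0 \<le> c \<Longrightarrow> psd A \<Longrightarrow> psd (c *\<^sub>R A)"
  by (simp add: psd_iff_qform qform_scaleR)

definition hermitian :: "complex^'n^'n \<Rightarrow> bool" where
  "hermitian A \<longleftrightarrow> (\<forall>i j. A$j$i = cnj (A$i$j))"

lemma hermitian_nth: "hermitian A \<Longrightarrow> A$j$i = cnj (A$i$j)"
  unfolding hermitian_def by blast

lemma psd_imp_hermitian:
  assumes "psd A"
  shows "hermitian A"
  unfolding hermitian_def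
proof (intro allI)
  fix i j
  have real: "Im (qform A v) = 0" for v
    using assms by (simp add: psd_iff_qform)
  have diag: "qform A (axis k 1) = A$k$k" for k
    by (simp add: cinner_axis_left matrix_vector_mult_axis)
  show "A$j$i = cnj (A$i$j)"
  proof (cases "i = j")
    case True
    then show ?thesis using real[of "axis i 1"] by (simp add: diag complex_eq_iff)
  next
    case False
    have pair: "qform A (axis i 1 + axis j c) =
        A$i$i + c * A$i$j + cnj c * A$j$i + cnj c * c * A$j$j" for c
      using False by (simp add: cinner_add_left cinner_add_right matrix_vector_right_distrib
          cinner_axis_left matrix_vector_mult_axis algebra_simps)
    have "Im (A$i$j + A$j$i) = 0" "Re (A$i$j - A$j$i) = 0"
      using real[of "axis i 1 + axis j 1"] real[of "axis i 1 + axis j \<i>"]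
        real[of "axis i 1"] real[of "axis j 1"]
      unfolding pair diag by simp_all
    then show ?thesis by (simp add: complex_eq_iff)
  qed
qed

lemma nonneg_quadratic_form_cross_le:
  fixes A D S :: real
  assumes A: "0 \<le> A" and D: "0 \<le> D"
    and nonneg: "\<And>a b. 0 \<le> a^2 * A + b^2 * D + a * b * S"
  shows "S \<le> 2 * sqrt A * sqrt D"
proof (rule ccontr)
  assume "\<not> ?thesis"
  then have S: "2 * sqrt A * sqrt D < S" by simp
  then have "S \<noteq> 0"
    using A D by (metis mult_nonneg_nonneg real_sqrt_ge_zero zero_le_numeral not_less)
  consider "A = 0" | "D = 0" | "0 < A" "0 < D" using A D by linarith
  then show False
  proof cases
    case 1
    have "0 \<le> (- (D + 1) / S)^2 * A + 1^2 * D + (- (D + 1) / S) * 1 * S" by (rule nonneg)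
    with 1 \<open>S \<noteq> 0\<close> show False by simp
  next
    case 2
    have "0 \<le> 1^2 * A + (- (A + 1) / S)^2 * D + 1 * (- (A + 1) / S) * S" by (rule nonneg)
    with 2 \<open>S \<noteq> 0\<close> show False by simp
  next
    case 3
    define a b where "a = sqrt D" and "b = - sqrt A"
    have "A = b^2" "D = a^2" using A D by (simp_all add: a_def b_def)
    moreover have "0 \<le> a^2 * A + b^2 * D + a * b * S" by (rule nonneg)
    ultimately have "(- a * b) * S \<le> (- a * b) * (- 2 * a * b)"
      by (simp add: power2_eq_square algebra_simps)
    moreover have "0 < - a * b" using 3 by (simp add: a_def b_def)
    ultimately have "S \<le> - 2 * a * b" by (metis mult_le_cancel_left_pos)
    with S show False by (simp add: a_def b_def algebra_simps)
  qed
qed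

lemma psd_qform_add_le:
  assumes "psd P"
  shows "Re (qform P (x + y)) \<le> (sqrt (Re (qform P x)) + sqrt (Re (qform P y)))^2"
proof -
  let ?A = "Re (qform P x)" and ?D = "Re (qform P y)"
  let ?S = "Re (cinner x (P *v y) + cinner y (P *v x))"
  have "Re (qform P (of_real a *s x + of_real b *s y)) = a^2 * ?A + b^2 * ?D + a * b * ?S" for a b
    unfolding qform_linear_combination by (simp add: power2_eq_square algebra_simps)
  then have "0 \<le> a^2 * ?A + b^2 * ?D + a * b * ?S" for a b
    using assms by (metis psd_iff_qform)
  moreover have "0 \<le> ?A" "0 \<le> ?D" using assms by (simp_all add: psd_iff_qform)
  ultimately have "?S \<le> 2 * sqrt ?A * sqrt ?D" by (rule nonneg_quadratic_form_cross_le[rotated 2])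
  moreover have "Re (qform P (x + y)) = ?A + ?D + ?S"
    using qform_linear_combination[where P=P and a=1 and x=x and b=1 and y=y] by simp
  ultimately show ?thesis using \<open>0 \<le> ?A\<close> \<open>0 \<le> ?D\<close> by (simp add: power2_sum)
qed

section \<open>Common eigenbases of commuting qubit observables\<close>

definition orthonormal_pair :: "complex^'n \<Rightarrow> complex^'n \<Rightarrow> bool" where
  "orthonormal_pair u1 u2 \<longleftrightarrow> cinner u1 u1 = 1 \<and> cinner u2 u2 = 1 \<and> cinner u1 u2 = 0"

lemma orthonormal_pair_normalize:
  assumes "cinner v1 v1 = of_real (n^2)" "cinner v2 v2 = of_real (n^2)" "cinner v1 v2 = 0" "n > 0"
  shows "orthonormal_pair (of_real (1/n) *s v1) (of_real (1/n) *s v2)"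
  using assms
  by (simp add: orthonormal_pair_def cinner_scale_left cinner_scale_right power2_eq_square)

lemma orthonormal_pair_axis: "orthonormal_pair (axis 1 1 :: complex^2) (axis 2 1)"
  unfolding orthonormal_pair_def cinner_axis_left by (simp add: axis_def)

lemma orthonormal_pair_resolution_of_identity:
  fixes u1 u2 :: "complex^2"
  assumes "orthonormal_pair u1 u2"
  shows "outer u1 u1 + outer u2 u2 = mat 1"
proof -
  define U :: "complex^2^2" where "U = (\<chi> i k. if k = 1 then u1$i else u2$i)"
  define U' :: "complex^2^2" where "U' = (\<chi> k i. cnj (U$i$k))"
  have "U' ** U = mat 1"
    using assms cinner_commute[of u2 u1]
    by (auto simp: orthonormal_pair_def cinner_def U_def U'_def matrix_matrix_mult_def mat_def
        vec_eq_iff forall_2 sum_2)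
  then have "U ** U' = mat 1"
    by (simp add: matrix_left_right_inverse)
  then show ?thesis
    by (simp add: U_def U'_def outer_def matrix_matrix_mult_def vec_eq_iff sum_2)
qed

lemma orthonormal_pair_resolution_nth:
  fixes u1 u2 :: "complex^2"
  assumes "orthonormal_pair u1 u2"
  shows "u1$i * cnj (u1$k) + u2$i * cnj (u2$k) = (if i = k then 1 else 0)"
  using arg_cong[OF orthonormal_pair_resolution_of_identity[OF assms], of "\<lambda>M. M$i$k"]
  by (simp add: outer_def mat_def)

lemma diagonal2_axis_eigenvectors:
  fixes R :: qmat
  assumes "R$1$2 = 0" "R$2$1 = 0"
  shows "R *v axis 1 1 = R$1$1 *s axis 1 1" "R *v axis 2 1 = R$2$2 *s axis 2 1"
  using assms
  by (simp_all add: matrix_vector_mult_axis vec_eq_iff forall_2) (simp_all add: axis_def)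

lemma hermitian2_eigenbasis:
  fixes R :: qmat
  assumes "hermitian R"
  shows "\<exists>u1 u2 \<mu>1 \<mu>2. orthonormal_pair u1 u2 \<and> R *v u1 = \<mu>1 *s u1 \<and> R *v u2 = \<mu>2 *s u2"
proof (cases "R$1$2 = 0")
  case True
  moreover have "R$2$1 = 0" using True hermitian_nth[OF assms, of 1 2] by simp
  ultimately show ?thesis
    using orthonormal_pair_axis diagonal2_axis_eigenvectors by blast
next
  case False
  define z where "z = R$1$2"
  define m where "m = Re (R$1$1 + R$2$2) / 2"
  define \<delta> where "\<delta> = Re (R$1$1 - R$2$2) / 2"
  define lam where "lam = sqrt (\<delta>^2 + (cmod z)^2)"
  define g where "g = lam - \<delta>"
  define n where "n = sqrt ((cmod z)^2 + g^2)"
  have R_eq: "R$1$1 = of_real (m + \<delta>)" "R$2$2 = of_real (m - \<delta>)" "R$2$1 = cnj z"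
    using hermitian_nth[OF assms, of 1 1] hermitian_nth[OF assms, of 2 2]
      hermitian_nth[OF assms, of 1 2]
    by (simp_all add: m_def \<delta>_def z_def complex_eq_iff field_simps)
  have "cmod z > 0" using False by (simp add: z_def)
  then have "\<bar>\<delta>\<bar> < lam"
    using real_sqrt_less_mono[of "\<delta>^2" "\<delta>^2 + (cmod z)^2"] by (simp add: lam_def)
  then have "g > 0" by (simp add: g_def)
  then have "n > 0" by (simp add: n_def add_nonneg_pos)
  have "lam^2 = \<delta>^2 + (cmod z)^2" by (simp add: lam_def)
  then have key: "cnj z * z = of_real ((lam + \<delta>) * g)"
    by (simp add: g_def complex_norm_square[symmetric] algebra_simps power2_eq_square)
  \<comment> \<open>As R = m I + [[\<delta>, z], [cnj z, -\<delta>]], these are eigenvectors for m + lam and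
    m - lam.\<close>
  define v1 :: "complex^2" where "v1 = vector [z, of_real g]"
  define v2 :: "complex^2" where "v2 = vector [- of_real g, cnj z]"
  have "cinner v1 v1 = of_real (n^2)" "cinner v2 v2 = of_real (n^2)" "cinner v1 v2 = 0"
    using \<open>g > 0\<close> complex_norm_square[of z]
    by (simp_all add: v1_def v2_def n_def cinner_def sum_2 mult.commute power2_eq_square)
  then have on: "orthonormal_pair (of_real (1/n) *s v1) (of_real (1/n) *s v2)"
    using \<open>n > 0\<close> by (rule orthonormal_pair_normalize)
  have "R *v v1 = of_real (m + lam) *s v1" "R *v v2 = of_real (m - lam) *s v2"
    using key by (simp_all add: v1_def v2_def R_eq z_def[symmetric] matrix_vector_mult_def
        vec_eq_iff forall_2 sum_2 g_def algebra_simps)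
  then have "R *v (of_real (1/n) *s v1) = of_real (m + lam) *s (of_real (1/n) *s v1)"
    "R *v (of_real (1/n) *s v2) = of_real (m - lam) *s (of_real (1/n) *s v2)"
    by (simp_all only: vector_scalar_commute vector_smult_assoc mult.commute)
  with on show ?thesis by blast
qed

lemma commuting2_in_span:
  fixes R X :: qmat
  assumes comm: "R ** X = X ** R" and nz: "R$1$2 \<noteq> 0"
  shows "\<exists>\<alpha> \<beta>. \<forall>v. X *v v = \<alpha> *s v + \<beta> *s (R *v v)"
proof -
  define \<beta> where "\<beta> = X$1$2 / R$1$2"
  define \<alpha> where "\<alpha> = X$1$1 - \<beta> * R$1$1"
  have c11: "R$1$2 * X$2$1 = X$1$2 * R$2$1"
    using arg_cong[OF comm, of "\<lambda>M. M$1$1"] by (simp add: matrix_matrix_mult_def sum_2)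
  have c12: "R$1$1 * X$1$2 + R$1$2 * X$2$2 = X$1$1 * R$1$2 + X$1$2 * R$2$2"
    using arg_cong[OF comm, of "\<lambda>M. M$1$2"] by (simp add: matrix_matrix_mult_def sum_2)
  have "X$1$1 = \<alpha> + \<beta> * R$1$1" "X$1$2 = \<beta> * R$1$2"
    "X$2$1 = \<beta> * R$2$1" "X$2$2 = \<alpha> + \<beta> * R$2$2"
    using nz c11 c12 by (simp_all add: \<alpha>_def \<beta>_def field_simps)
  then have "X *v v = \<alpha> *s v + \<beta> *s (R *v v)" for v
    by (simp add: matrix_vector_mult_def vec_eq_iff forall_2 sum_2 algebra_simps)
  then show ?thesis by blast
qed

lemma commuting_hermitian2_common_eigenbasis:
  fixes S :: "qmat set"
  assumes herm: "\<And>X. X \<in> S \<Longrightarrow> hermitian X"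
    and comm: "\<And>X Y. X \<in> S \<Longrightarrow> Y \<in> S \<Longrightarrow> X ** Y = Y ** X"
  shows "\<exists>u1 u2. orthonormal_pair u1 u2 \<and> (\<forall>X\<in>S. (\<exists>\<mu>. X *v u1 = \<mu> *s u1) \<and> (\<exists>\<mu>. X *v u2 = \<mu> *s u2))"
proof (cases "\<exists>R\<in>S. R$1$2 \<noteq> 0")
  case True
  then obtain R where "R \<in> S" "R$1$2 \<noteq> 0" by blast
  obtain u1 u2 \<mu>1 \<mu>2 where on: "orthonormal_pair u1 u2"
    and eig: "R *v u1 = \<mu>1 *s u1" "R *v u2 = \<mu>2 *s u2"
    using hermitian2_eigenbasis[OF herm[OF \<open>R \<in> S\<close>]] by blast
  have "(\<exists>\<mu>. X *v u1 = \<mu> *s u1) \<and> (\<exists>\<mu>. X *v u2 = \<mu> *s u2)" if X: "X \<in> S" for X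
  proof -
    obtain \<alpha> \<beta> where "\<forall>v. X *v v = \<alpha> *s v + \<beta> *s (R *v v)"
      using commuting2_in_span[OF comm[OF \<open>R \<in> S\<close> X] \<open>R$1$2 \<noteq> 0\<close>] by blast
    then have "X *v u1 = (\<alpha> + \<beta> * \<mu>1) *s u1" "X *v u2 = (\<alpha> + \<beta> * \<mu>2) *s u2"
      by (simp_all add: eig vector_smult_assoc vector_sadd_rdistrib)
    then show ?thesis by blast
  qed
  with on show ?thesis by blast
next
  case False
  have "X *v axis 1 1 = X$1$1 *s axis 1 1 \<and> X *v axis 2 1 = X$2$2 *s axis 2 1" if "X \<in> S" for X
    using False that hermitian_nth[OF herm[OF that], of 1 2] diagonal2_axis_eigenvectors[of X]
    by simp
  with orthonormal_pair_axis show ?thesis by blast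
qed

lemma eigenvalue_eq_qform:
  assumes "cinner u u = 1" "A *v u = \<mu> *s u"
  shows "\<mu> = qform A u"
  using assms by (simp add: cinner_scale_right)

lemma state2_spectral_decomposition:
  fixes X :: qmat
  assumes st: "is_state X" and on: "orthonormal_pair u1 u2"
    and eig: "X *v u1 = \<mu>1 *s u1" "X *v u2 = \<mu>2 *s u2"
  shows "\<exists>p. 0 \<le> p \<and> p \<le> 1 \<and> X = p *\<^sub>R outer u1 u1 + (1 - p) *\<^sub>R outer u2 u2"
proof -
  have unit: "cinner u1 u1 = 1" "cinner u2 u2 = 1" using on by (simp_all add: orthonormal_pair_def)
  have psd: "psd X" and tr: "mtr X = 1" using st by (simp_all add: is_state_def)
  define p1 where "p1 = Re \<mu>1"
  define p2 where "p2 = Re \<mu>2"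
  have \<mu>_real: "\<mu>1 = of_real p1" "\<mu>2 = of_real p2" and nonneg: "0 \<le> p1" "0 \<le> p2"
    using eigenvalue_eq_qform[OF unit(1) eig(1)] eigenvalue_eq_qform[OF unit(2) eig(2)] psd
    by (auto simp: psd_iff_qform p1_def p2_def complex_eq_iff)
  have "X = X ** (outer u1 u1 + outer u2 u2)"
    using orthonormal_pair_resolution_of_identity[OF on] by simp
  also have "\<dots> = p1 *\<^sub>R outer u1 u1 + p2 *\<^sub>R outer u2 u2"
    by (simp add: matrix_add_ldistrib matrix_mul_outer eig \<mu>_real outer_of_real_scale_left)
  finally have X: "X = p1 *\<^sub>R outer u1 u1 + p2 *\<^sub>R outer u2 u2" .
  have "p1 + p2 = 1"
    using tr unfolding X by (simp add: mtr_add mtr_scaleR mtr_outer unit complex_eq_iff)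
  with X nonneg show ?thesis by (intro exI[of _ p1]) auto
qed

lemma qform_spectral2:
  assumes "orthonormal_pair u1 u2"
  shows "qform (p *\<^sub>R outer u1 u1 + q *\<^sub>R outer u2 u2) u1 = of_real p"
    "qform (p *\<^sub>R outer u1 u1 + q *\<^sub>R outer u2 u2) u2 = of_real q"
  using assms cinner_commute[of u2 u1]
  by (simp_all add: qform_add qform_scaleR qform_outer orthonormal_pair_def)

lemma commuting_states2_common_spectral_decomposition:
  fixes S :: "qmat set"
  assumes states: "\<And>X. X \<in> S \<Longrightarrow> is_state X"
    and comm: "\<And>X Y. X \<in> S \<Longrightarrow> Y \<in> S \<Longrightarrow> X ** Y = Y ** X"
  shows "\<exists>u1 u2. orthonormal_pair u1 u2 \<and>
    (\<forall>X\<in>S. \<exists>p. 0 \<le> p \<and> p \<le> 1 \<and> X = p *\<^sub>R outer u1 u1 + (1 - p) *\<^sub>R outer u2 u2)"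
proof -
  have "\<And>X. X \<in> S \<Longrightarrow> hermitian X"
    using states by (simp add: is_state_def psd_imp_hermitian)
  then obtain u1 u2 where on: "orthonormal_pair u1 u2"
    and eig: "\<forall>X\<in>S. (\<exists>\<mu>. X *v u1 = \<mu> *s u1) \<and> (\<exists>\<mu>. X *v u2 = \<mu> *s u2)"
    using commuting_hermitian2_common_eigenbasis comm by blast
  show ?thesis
    using on eig states state2_spectral_decomposition[OF _ on] by metis
qed

section \<open>Optimal couplings of commuting qubit states\<close>

lemma C_symm2_explicit:
  "C_symm2 = (\<chi> p q. if p = q then (if fst p = snd p then 4 else 8)
     else if fst p = snd p \<and> fst q = snd q then -4 else 0)"
  unfolding C_symm2_def
  by (simp add: vec_eq_iff numeral_3_eq_3 forall_2 pauli_def sigma1_def sigma2_def sigma3_def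
      kron_def matrix_matrix_mult_def sum_UNIV_2x2 mat_def transpose_def)

definition max_entangled :: "complex^(2\<times>2)" where
  "max_entangled = (\<chi> p. if fst p = snd p then 1 else 0)"

lemma mtr_mult_C_symm2: "mtr (P ** C_symm2) = 8 * mtr P - 4 * qform P max_entangled"
  unfolding C_symm2_explicit mtr_def cinner_def max_entangled_def matrix_matrix_mult_def
    matrix_vector_mult_def
  by (simp add: sum_UNIV_2x2 algebra_simps)

lemma coupling_cost_eq:
  "P \<in> couplings \<rho> \<omega> \<Longrightarrow> Re (mtr (P ** C_symm2)) = 8 - 4 * Re (qform P max_entangled)"
  by (simp add: mtr_mult_C_symm2 couplings_def is_state_def)

(* u (x) v^* in H (x) H^*, i.e. the rank-one operator u v^* written as a vector. *)
definition tensor_dual :: "complex^2 \<Rightarrow> complex^2 \<Rightarrow> complex^(2\<times>2)" where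
  "tensor_dual u v = (\<chi> p. u$fst p * cnj (v$snd p))"

lemma max_entangled_resolution:
  "orthonormal_pair u1 u2 \<Longrightarrow> max_entangled = tensor_dual u1 u1 + tensor_dual u2 u2"
  by (simp add: max_entangled_def tensor_dual_def vec_eq_iff orthonormal_pair_resolution_nth)

lemma qform_tensor_dual:
  "qform P (tensor_dual u v) = (\<Sum>i\<in>UNIV. \<Sum>j\<in>UNIV. \<Sum>k\<in>UNIV. \<Sum>l\<in>UNIV.
     cnj (u$i) * v$j * P$(i,j)$(k,l) * u$k * cnj (v$l))"
  by (simp add: cinner_def tensor_dual_def matrix_vector_mult_def sum_UNIV_prod sum_distrib_left
      mult_ac)

lemma qform_tensor_dual_marginal_H:
  assumes "orthonormal_pair u1 u2"
  shows "qform P (tensor_dual u1 v) + qform P (tensor_dual u2 v) = qform (transpose (ptr_H P)) v"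
proof -
  have res: "cnj (u1$i) * u1$k + cnj (u2$i) * u2$k = (if i = k then 1 else 0)" for i k
    using orthonormal_pair_resolution_nth[OF assms, of k i] by (auto simp: mult.commute)
  have "qform P (tensor_dual u1 v) + qform P (tensor_dual u2 v) =
    (\<Sum>i\<in>UNIV. \<Sum>j\<in>UNIV. \<Sum>k\<in>UNIV. \<Sum>l\<in>UNIV.
      (cnj (u1$i) * u1$k + cnj (u2$i) * u2$k) * (v$j * P$(i,j)$(k,l) * cnj (v$l)))"
    unfolding qform_tensor_dual by (simp add: sum.distrib[symmetric] algebra_simps)
  also have "\<dots> = (\<Sum>i\<in>UNIV. \<Sum>j\<in>UNIV. \<Sum>l\<in>UNIV. v$j * P$(i,j)$(i,l) * cnj (v$l))"
    by (simp add: res sum_2)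
  also have "\<dots> = qform (transpose (ptr_H P)) v"
    by (simp add: cinner_def matrix_vector_mult_def ptr_H_def transpose_def sum_2 algebra_simps)
  finally show ?thesis .
qed

lemma qform_tensor_dual_marginal_Hstar:
  assumes "orthonormal_pair u1 u2"
  shows "qform P (tensor_dual v u1) + qform P (tensor_dual v u2) = qform (ptr_Hstar P) v"
proof -
  have "qform P (tensor_dual v u1) + qform P (tensor_dual v u2) =
    (\<Sum>i\<in>UNIV. \<Sum>j\<in>UNIV. \<Sum>k\<in>UNIV. \<Sum>l\<in>UNIV.
      (u1$j * cnj (u1$l) + u2$j * cnj (u2$l)) * (cnj (v$i) * P$(i,j)$(k,l) * v$k))"
    unfolding qform_tensor_dual by (simp add: sum.distrib[symmetric] algebra_simps)
  also have "\<dots> = qform (ptr_Hstar P) v"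
    by (simp add: orthonormal_pair_resolution_nth[OF assms] cinner_def matrix_vector_mult_def
        ptr_Hstar_def sum_2 algebra_simps)
  finally show ?thesis .
qed

definition overlap :: "real \<Rightarrow> real \<Rightarrow> real" where
  "overlap p q = (sqrt (min p q) + sqrt (min (1 - p) (1 - q)))^2"

lemma coupling_max_entangled_le_overlap:
  assumes on: "orthonormal_pair u1 u2"
    and \<rho>: "\<rho> = p *\<^sub>R outer u1 u1 + (1 - p) *\<^sub>R outer u2 u2"
    and \<omega>: "\<omega> = q *\<^sub>R outer u1 u1 + (1 - q) *\<^sub>R outer u2 u2"
    and P: "P \<in> couplings \<rho> \<omega>"
  shows "Re (qform P max_entangled) \<le> overlap p q"
proof -
  have psd: "psd P" and marg: "ptr_Hstar P = \<omega>" "transpose (ptr_H P) = \<rho>"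
    using P by (auto simp: couplings_def is_state_def)
  have nonneg: "0 \<le> Re (qform P v)" for v using psd by (simp add: psd_iff_qform)
  let ?t = "\<lambda>a b. Re (qform P (tensor_dual a b))"
  have "?t u1 u1 + ?t u2 u1 = p" "?t u1 u2 + ?t u2 u2 = 1 - p"
    using qform_tensor_dual_marginal_H[OF on, where P=P and v=u1]
      qform_tensor_dual_marginal_H[OF on, where P=P and v=u2]
    unfolding marg \<rho> qform_spectral2[OF on] by (metis Re_complex_of_real plus_complex.sel(1))+
  moreover have "?t u1 u1 + ?t u1 u2 = q" "?t u2 u1 + ?t u2 u2 = 1 - q"
    using qform_tensor_dual_marginal_Hstar[OF on, where P=P and v=u1]
      qform_tensor_dual_marginal_Hstar[OF on, where P=P and v=u2]
    unfolding marg \<omega> qform_spectral2[OF on] by (metis Re_complex_of_real plus_complex.sel(1))+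
  ultimately have "?t u1 u1 \<le> min p q" "?t u2 u2 \<le> min (1 - p) (1 - q)"
    using nonneg[of "tensor_dual u1 u2"] nonneg[of "tensor_dual u2 u1"] by auto
  then have "(sqrt (?t u1 u1) + sqrt (?t u2 u2))^2 \<le> overlap p q"
    unfolding overlap_def by (intro power_mono add_mono) (simp_all add: nonneg)
  moreover have "Re (qform P max_entangled) \<le> (sqrt (?t u1 u1) + sqrt (?t u2 u2))^2"
    unfolding max_entangled_resolution[OF on] by (rule psd_qform_add_le[OF psd])
  ultimately show ?thesis by linarith
qed

lemma cinner_tensor_dual: "cinner (tensor_dual a b) (tensor_dual c d) = cinner a c * cinner d b"
  by (simp add: cinner_def tensor_dual_def sum_UNIV_prod sum_product algebra_simps)
    (subst sum.swap, simp)

lemma transpose_add: "transpose (A + B) = transpose A + transpose B"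
  by (simp add: transpose_def vec_eq_iff)

lemma vec_lambda_zero: "(\<chi> i. 0) = 0"
  by (simp add: vec_eq_iff)

lemma ptr_Hstar_add: "ptr_Hstar (A + B) = ptr_Hstar A + ptr_Hstar B"
  by (simp add: ptr_Hstar_def vec_eq_iff sum.distrib)

lemma ptr_Hstar_scaleR: "ptr_Hstar (c *\<^sub>R A) = c *\<^sub>R ptr_Hstar A"
  by (simp add: ptr_Hstar_def vec_eq_iff scaleR_sum_right)

lemma ptr_H_add: "ptr_H (A + B) = ptr_H A + ptr_H B"
  by (simp add: ptr_H_def vec_eq_iff sum.distrib)

lemma ptr_H_scaleR: "ptr_H (c *\<^sub>R A) = c *\<^sub>R ptr_H A"
  by (simp add: ptr_H_def vec_eq_iff scaleR_sum_right)

lemma ptr_Hstar_outer_tensor_dual: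
  "ptr_Hstar (outer (tensor_dual a b) (tensor_dual c d)) = (\<chi> i k. cinner b d * outer a c $ i $ k)"
  by (simp add: ptr_Hstar_def outer_def tensor_dual_def cinner_def vec_eq_iff sum_distrib_left
      algebra_simps)

lemma transpose_ptr_H_outer_tensor_dual:
  "transpose (ptr_H (outer (tensor_dual a b) (tensor_dual c d))) =
    (\<chi> l j. cinner c a * outer d b $ l $ j)"
  by (simp add: ptr_H_def transpose_def outer_def tensor_dual_def cinner_def vec_eq_iff
      sum_distrib_left algebra_simps)

lemma coupling_attaining_overlap:
  assumes on: "orthonormal_pair u1 u2"
    and \<rho>: "\<rho> = p *\<^sub>R outer u1 u1 + (1 - p) *\<^sub>R outer u2 u2"
    and \<omega>: "\<omega> = q *\<^sub>R outer u1 u1 + (1 - q) *\<^sub>R outer u2 u2"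
    and p: "0 \<le> p" "p \<le> 1" and q: "0 \<le> q" "q \<le> 1"
  shows "\<exists>P\<in>couplings \<rho> \<omega>. Re (qform P max_entangled) = overlap p q"
proof -
  have [simp]: "cinner u1 u1 = 1" "cinner u2 u2 = 1" "cinner u1 u2 = 0" "cinner u2 u1 = 0"
    using on cinner_commute[of u2 u1] by (simp_all add: orthonormal_pair_def)
  define \<alpha> \<delta> where "\<alpha> = min p q" and "\<delta> = min (1 - p) (1 - q)"
  define \<beta> \<epsilon> where "\<beta> = q - \<alpha>" and "\<epsilon> = p - \<alpha>"
  have nonneg: "0 \<le> \<alpha>" "0 \<le> \<delta>" "0 \<le> \<beta>" "0 \<le> \<epsilon>"
    using p q by (auto simp: \<alpha>_def \<delta>_def \<beta>_def \<epsilon>_def)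
  have weights: "\<alpha> + \<epsilon> = p" "\<delta> + \<beta> = 1 - p" "\<alpha> + \<beta> = q" "\<delta> + \<epsilon> = 1 - q"
    by (auto simp: \<alpha>_def \<delta>_def \<beta>_def \<epsilon>_def)
  \<comment> \<open>Weights min p q and min (1 - p) (1 - q) sit coherently on u1 (x) u1^* and u2 (x) u2^*;
    the leftover marginal mass sits incoherently on u1 (x) u2^* and u2 (x) u1^*.\<close>
  define x y z w where "x = tensor_dual u1 u1" and "y = tensor_dual u2 u2"
    and "z = tensor_dual u1 u2" and "w = tensor_dual u2 u1"
  define \<psi> where "\<psi> = sqrt \<alpha> *\<^sub>R x + sqrt \<delta> *\<^sub>R y"
  define P where "P = outer \<psi> \<psi> + \<beta> *\<^sub>R outer z z + \<epsilon> *\<^sub>R outer w w"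
  define m where "m = sqrt \<alpha> * sqrt \<delta>"
  have P_expand: "P = \<alpha> *\<^sub>R outer x x + m *\<^sub>R outer x y + m *\<^sub>R outer y x + \<delta> *\<^sub>R outer y y
      + \<beta> *\<^sub>R outer z z + \<epsilon> *\<^sub>R outer w w"
    using nonneg by (simp add: P_def \<psi>_def m_def outer_add_left outer_add_right outer_scaleR_left
        outer_scaleR_right algebra_simps)
  have "psd P"
    unfolding P_def using nonneg by (intro psd_add psd_scaleR psd_outer_self)
  moreover have "mtr P = 1"
    using weights by (simp add: P_expand x_def y_def z_def w_def mtr_add mtr_scaleR mtr_outer
        cinner_tensor_dual flip: of_real_add)
  moreover have "ptr_Hstar P = \<omega>"
    unfolding \<omega> P_expand weights(4)[symmetric] unfolding weights(3)[symmetric]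
    by (simp add: x_def y_def z_def w_def ptr_Hstar_add ptr_Hstar_scaleR ptr_Hstar_outer_tensor_dual
        vec_lambda_zero) (simp add: scaleR_add_left algebra_simps)
  moreover have "ptr_H P = transpose \<rho>"
  proof -
    have "transpose (ptr_H P) = \<rho>"
      unfolding \<rho> P_expand weights(2)[symmetric] unfolding weights(1)[symmetric]
      by (simp add: x_def y_def z_def w_def ptr_H_add ptr_H_scaleR transpose_add transpose_scalar
          transpose_ptr_H_outer_tensor_dual vec_lambda_zero)
        (simp add: scaleR_add_left algebra_simps)
    then show ?thesis by auto
  qed
  moreover have "qform P max_entangled = of_real ((sqrt \<alpha> + sqrt \<delta>)^2)"
    using nonneg
    by (simp add: P_expand max_entangled_resolution[OF on] x_def y_def z_def w_def qform_add
        qform_scaleR qform_outer cinner_add_left cinner_add_right cinner_tensor_dual m_def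
        power2_sum)
  ultimately show ?thesis
    by (intro bexI[of _ P]) (simp_all add: couplings_def is_state_def overlap_def \<alpha>_def \<delta>_def)
qed

lemma D2_symm2_eq_overlap:
  assumes on: "orthonormal_pair u1 u2"
    and \<rho>: "\<rho> = p *\<^sub>R outer u1 u1 + (1 - p) *\<^sub>R outer u2 u2"
    and \<omega>: "\<omega> = q *\<^sub>R outer u1 u1 + (1 - q) *\<^sub>R outer u2 u2"
    and p: "0 \<le> p" "p \<le> 1" and q: "0 \<le> q" "q \<le> 1"
  shows "D2_symm2 \<rho> \<omega> = 8 - 4 * overlap p q"
  unfolding D2_symm2_def
proof (rule cInf_eq_minimum)
  obtain P where "P \<in> couplings \<rho> \<omega>" "Re (qform P max_entangled) = overlap p q"
    using coupling_attaining_overlap[OF assms] by blast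
  then show "8 - 4 * overlap p q \<in> (\<lambda>P. Re (mtr (P ** C_symm2))) ` couplings \<rho> \<omega>"
    by (metis (no_types, lifting) coupling_cost_eq image_eqI)
next
  fix c assume "c \<in> (\<lambda>P. Re (mtr (P ** C_symm2))) ` couplings \<rho> \<omega>"
  then obtain P where "P \<in> couplings \<rho> \<omega>" "c = Re (mtr (P ** C_symm2))" by blast
  then show "8 - 4 * overlap p q \<le> c"
    using coupling_cost_eq coupling_max_entangled_le_overlap[OF on \<rho> \<omega>] by fastforce
qed

section \<open>The overlap inequality\<close>

lemma overlap_commute: "overlap p q = overlap q p"
  by (simp add: overlap_def min.commute)

lemma overlap_complement: "overlap (1 - p) (1 - q) = overlap p q"
  by (simp add: overlap_def add.commute)

lemma overlap_of_le: "p \<le> q \<Longrightarrow> overlap p q = (sqrt p + sqrt (1 - q))^2"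
  by (simp add: overlap_def)

lemma overlap_triangle_right_max:
  assumes "0 \<le> r" "r \<le> w" "s \<le> w" "0 \<le> s" "w \<le> 1"
  shows "overlap r s + overlap s w \<le> overlap s s + overlap r w"
proof -
  have sq: "(sqrt x)^2 = x" "(sqrt (1 - x))^2 = 1 - x" if "0 \<le> x" "x \<le> 1" for x
    using that by simp_all
  have "overlap s w = (sqrt s + sqrt (1 - w))^2" "overlap s s = (sqrt s + sqrt (1 - s))^2"
    "overlap r w = (sqrt r + sqrt (1 - w))^2"
    using assms by (simp_all add: overlap_of_le)
  moreover consider "s \<le> r" | "r \<le> s" by linarith
  then have "overlap r s + (sqrt s + sqrt (1 - w))^2
      \<le> (sqrt s + sqrt (1 - s))^2 + (sqrt r + sqrt (1 - w))^2"
  proof cases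
    case 1
    have "0 \<le> sqrt s * (sqrt (1 - s) - sqrt (1 - r)) + sqrt (1 - w) * (sqrt r - sqrt s)"
      using 1 assms by (intro add_nonneg_nonneg mult_nonneg_nonneg) simp_all
    moreover have "overlap r s = (sqrt s + sqrt (1 - r))^2"
      using 1 by (simp add: overlap_commute[of r] overlap_of_le)
    ultimately show ?thesis
      using 1 assms sq[of r] sq[of s] sq[of w] by (simp add: power2_sum algebra_simps)
  next
    case 2
    have "0 \<le> (sqrt s - sqrt r) * (sqrt (1 - s) - sqrt (1 - w))"
      using 2 assms by (intro mult_nonneg_nonneg) simp_all
    moreover have "overlap r s = (sqrt r + sqrt (1 - s))^2"
      using 2 by (simp add: overlap_of_le)
    ultimately show ?thesis by (simp add: power2_sum algebra_simps)
  qed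
  ultimately show ?thesis by simp
qed

lemma overlap_triangle:
  assumes "0 \<le> r" "r \<le> 1" "0 \<le> s" "s \<le> 1" "0 \<le> w" "w \<le> 1"
  shows "overlap r s + overlap s w \<le> overlap s s + overlap r w"
proof -
  have ordered: "overlap r s + overlap s w \<le> overlap s s + overlap r w"
    if "0 \<le> r" "r \<le> w" "0 \<le> s" "s \<le> 1" "w \<le> 1" for r s w
  proof (cases "s \<le> w")
    case True
    then show ?thesis using that by (intro overlap_triangle_right_max) simp_all
  next
    case False
    have "overlap (1 - w) (1 - s) + overlap (1 - s) (1 - r)
        \<le> overlap (1 - s) (1 - s) + overlap (1 - w) (1 - r)"
      using False that by (intro overlap_triangle_right_max) simp_all
    then show ?thesis by (simp add: overlap_complement overlap_commute)
  qed
  show ?thesis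
  proof (cases "r \<le> w")
    case True
    then show ?thesis using ordered assms by simp
  next
    case False
    then show ?thesis using ordered[where r=w and w=r and s=s] assms by (simp add: overlap_commute)
  qed
qed

theorem proposition3p4:
  fixes \<rho> \<sigma> \<omega> :: qmat
  assumes "is_state \<rho>" and "is_state \<sigma>" and "is_state \<omega>"
    and "\<rho> ** \<sigma> = \<sigma> ** \<rho>" and "\<sigma> ** \<omega> = \<omega> ** \<sigma>" and "\<rho> ** \<omega> = \<omega> ** \<rho>"
  shows "d2_symm2 \<rho> \<sigma> + d2_symm2 \<sigma> \<omega> \<ge> d2_symm2 \<rho> \<omega>"
proof -
  have states: "\<And>X. X \<in> {\<rho>, \<sigma>, \<omega>} \<Longrightarrow> is_state X"
    and comm: "\<And>X Y. X \<in> {\<rho>, \<sigma>, \<omega>} \<Longrightarrow> Y \<in> {\<rho>, \<sigma>, \<omega>} \<Longrightarrow> X ** Y = Y ** X"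
    using assms by auto
  obtain u1 u2 where on: "orthonormal_pair u1 u2" and
    spectral: "\<forall>X\<in>{\<rho>, \<sigma>, \<omega>}. \<exists>p. 0 \<le> p \<and> p \<le> 1 \<and>
      X = p *\<^sub>R outer u1 u1 + (1 - p) *\<^sub>R outer u2 u2"
    using commuting_states2_common_spectral_decomposition[OF states comm] by blast
  then obtain r s w where
    r: "\<rho> = r *\<^sub>R outer u1 u1 + (1 - r) *\<^sub>R outer u2 u2" "0 \<le> r" "r \<le> 1" and
    s: "\<sigma> = s *\<^sub>R outer u1 u1 + (1 - s) *\<^sub>R outer u2 u2" "0 \<le> s" "s \<le> 1" and
    w: "\<omega> = w *\<^sub>R outer u1 u1 + (1 - w) *\<^sub>R outer u2 u2" "0 \<le> w" "w \<le> 1"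
    by (metis insertCI)
  note D2 = D2_symm2_eq_overlap[OF on]
  have "overlap r s + overlap s w \<le> overlap s s + overlap r w"
    using r s w by (intro overlap_triangle)
  then show ?thesis
    unfolding d2_symm2_def D2[OF r(1) s(1) r(2,3) s(2,3)] D2[OF s(1) w(1) s(2,3) w(2,3)]
      D2[OF r(1) w(1) r(2,3) w(2,3)] D2[OF r(1) r(1) r(2,3) r(2,3)] D2[OF s(1) s(1) s(2,3) s(2,3)]
      D2[OF w(1) w(1) w(2,3) w(2,3)]
    by (simp add: field_simps)
qed

end
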